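(* In $G=BS(1,2)$, let $c_0(n)$ be the number of conjugacy classes of $G$ contained in the subgroup $\mathbb{Z}[1/2]$ whose length with respect to $\{a,t\}$ is $n$. Then the growth rate $\limsup_n c_0(n)^{1/n}$ of these conjugacy classes is approximately $1.348$.
   Context: $BS(1,2)=\langle a,t\mid tat^{-1}=a^2\rangle\cong \mathbb{Z}[1/2]\rtimes\mathbb{Z}$ via $a\mapsto(1,0)$, $t\mapsto(0,1)$; $\mathbb{Z}[1/2]=\{(x,0)\}$. The length of a conjugacy class is the minimal word length of its elements; the growth rate is the reciprocal of the radius of convergence of $\sum c_0(n)z^n$. *)

theory Defs
  imports "HOL-Analysis.Analysis"
begin

text \<open>BS(1,2) realised as Z[1/2] \<rtimes> Z: elements are pairs (x,m) with x a dyadic rational,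
  product (x,m)(y,n) = (x + 2^m y, m+n); a = (1,0), t = (0,1), so t a t^-1 = a^2.\<close>

type_synonym bs = "rat \<times> int"

definition dyadic :: "rat set" where
  "dyadic = {q. \<exists>z::int. \<exists>k::nat. q = of_int z / 2 ^ k}"

definition BS :: "bs set" where
  "BS = {(x, m). x \<in> dyadic}"

definition bs_mult :: "bs \<Rightarrow> bs \<Rightarrow> bs" where
  "bs_mult g h = (fst g + (2::rat) powi (snd g) * fst h, snd g + snd h)"

definition bs_one :: bs where
  "bs_one = (0, 0)"

definition gen_a :: bs where "gen_a = (1, 0)"
definition gen_t :: bs where "gen_t = (0, 1)"

definition bs_gens :: "bs set" where
  "bs_gens = {(1, 0), (-1, 0), (0, 1), (0, -1)}"

definition bs_eval :: "bs list \<Rightarrow> bs" where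
  "bs_eval w = foldr bs_mult w bs_one"

definition word_len :: "bs \<Rightarrow> nat" where
  "word_len g = (LEAST n. \<exists>w. set w \<subseteq> bs_gens \<and> length w = n \<and> bs_eval w = g)"

definition conj_class :: "bs \<Rightarrow> bs set" where
  "conj_class g = {g' \<in> BS. \<exists>h \<in> BS. bs_mult h g = bs_mult g' h}"

definition class_len :: "bs set \<Rightarrow> nat" where
  "class_len C = (LEAST n. \<exists>g \<in> C. word_len g = n)"

definition Zhalf :: "bs set" where
  "Zhalf = {(x, 0) | x. x \<in> dyadic}"

definition c0 :: "nat \<Rightarrow> nat" where
  "c0 n = card {C. (\<exists>g \<in> BS. C = conj_class g) \<and> C \<subseteq> Zhalf \<and> class_len C = n}"

end

theory Submission
  imports Defs "HOL-Real_Asymp.Real_Asymp" "HOL-Library.Log_Nat"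
begin

text \<open>Conjugation by t doubles the first coordinate, so the conjugacy class of (x, 0) is
  {(2^k x, 0) | k \<in> \<int>}: every class inside \<int>[1/2] contains an integer, and distinct odd
  integers lie in distinct classes. An integer X whose non-adjacent form (NAF) has length l and
  weight w is spelled by a word of length 2 l + w (Horner's rule), so its class has length at most
  this NAF cost. Conversely, in a word of length n spelling (x, 0) every letter a^\<plusminus>1 sits at
  some t-height h \<in> [-m, M] and contributes \<plusminus>2^h, so X = 2^m x is an integer of NAF weight at
  most the number of a-letters with |X| \<le> n 2^(M+m), while there are at least 2 (M + m)
  letters t^\<plusminus>1; hence X has NAF cost at most n + 2 log n + 2. Up to polynomial factors c0(n)
  is therefore governed by the number N(B) of integers of NAF cost at most B, and the splitting
  X = 2 Y or X = 4 Y \<plusminus> 1 gives N(B) \<approx> N(B - 2) + 2 N(B - 5). So N(B) grows like \<rho>^B,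
  where \<rho> \<approx> 1.3479 is the real root of \<rho>^5 = \<rho>^3 + 2.\<close>

section \<open>Growth rates of integer sequences\<close>

(* The offset 3/2 absorbs the additive constant: 3 - 3/2 - 2 * (3/2) = -3/2. *)
lemma recurrence_growth_upper:
  fixes f :: "nat \<Rightarrow> nat" and r :: real
  assumes small: "\<And>B. B < 5 \<Longrightarrow> f B \<le> 3"
    and step: "\<And>B. 5 \<le> B \<Longrightarrow> f B \<le> 3 + f (B - 2) + 2 * f (B - 5)"
    and r: "1 \<le> r" "r ^ 3 + 2 \<le> r ^ 5"
  shows "real (f B) \<le> 5 * r ^ B - 3 / 2"
proof (induction B rule: less_induct)
  case (less B)
  show ?case
  proof (cases "B < 5")
    case True
    then have "real (f B) \<le> 3" using small by simp
    moreover have "1 \<le> r ^ B" using r(1) by simp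
    ultimately show ?thesis by linarith
  next
    case False
    then obtain k where B: "B = k + 5" by (metis add.commute le_add_diff_inverse not_less)
    have "real (f B) \<le> 3 + real (f (B - 2)) + 2 * real (f (B - 5))"
      using step[of B] B by (simp flip: of_nat_add of_nat_mult)
    also have "\<dots> \<le> 3 + (5 * r ^ (B - 2) - 3 / 2) + 2 * (5 * r ^ (B - 5) - 3 / 2)"
      using less.IH[of "B - 2"] less.IH[of "B - 5"] B by simp
    also have "\<dots> = 5 * (r ^ k * (r ^ 3 + 2)) - 3 / 2"
      by (simp add: B numeral_eq_Suc algebra_simps)
    also have "\<dots> \<le> 5 * (r ^ k * r ^ 5) - 3 / 2"
      using r by simp
    also have "\<dots> = 5 * r ^ B - 3 / 2"
      by (simp add: B power_add)
    finally show ?thesis .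
  qed
qed

lemma recurrence_growth_lower:
  fixes f :: "nat \<Rightarrow> nat" and r :: real
  assumes pos: "\<And>B. 1 \<le> f B"
    and step: "\<And>B. 5 \<le> B \<Longrightarrow> f (B - 2) + 2 * f (B - 5) \<le> f B"
    and r: "1 \<le> r" "r ^ 5 \<le> r ^ 3 + 2"
  shows "r ^ B \<le> r ^ 4 * real (f B)"
proof (induction B rule: less_induct)
  case (less B)
  show ?case
  proof (cases "B < 5")
    case True
    then have "r ^ B \<le> r ^ 4" using r(1) by (intro power_increasing) simp_all
    also have "\<dots> \<le> r ^ 4 * real (f B)" using pos[of B] r(1) by simp
    finally show ?thesis .
  next
    case False
    then obtain k where B: "B = k + 5" by (metis add.commute le_add_diff_inverse not_less)
    have "r ^ B = r ^ k * r ^ 5" by (simp add: B power_add)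
    also have "\<dots> \<le> r ^ k * (r ^ 3 + 2)" using r by simp
    also have "\<dots> = r ^ (B - 2) + 2 * r ^ (B - 5)"
      by (simp add: B numeral_eq_Suc algebra_simps)
    also have "\<dots> \<le> r ^ 4 * real (f (B - 2)) + 2 * (r ^ 4 * real (f (B - 5)))"
      using less.IH[of "B - 2"] less.IH[of "B - 5"] B by simp
    also have "\<dots> = r ^ 4 * real (f (B - 2) + 2 * f (B - 5))"
      by (simp add: algebra_simps)
    also have "\<dots> \<le> r ^ 4 * real (f B)"
      using step[of B] B r(1) by (intro mult_left_mono) simp_all
    finally show ?thesis .
  qed
qed

lemma limsup_root_le:
  fixes f :: "nat \<Rightarrow> real"
  assumes bound: "\<And>n. f n \<le> K * (real n + 1) * r ^ n" and K: "0 < K" and r: "0 \<le> r"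
  shows "limsup (\<lambda>n. ereal (root n (f n))) \<le> ereal r"
proof -
  let ?g = "\<lambda>n. (K * (real n + 1)) powr (1 / real n) * r"
  have "(\<lambda>n. (K * (real n + 1)) powr (1 / real n)) \<longlonglongrightarrow> 1"
    using K by real_asymp
  then have lim: "?g \<longlonglongrightarrow> r"
    using tendsto_mult_right[of _ 1 sequentially r] by simp
  have "eventually (\<lambda>n. ereal (root n (f n)) \<le> ereal (?g n)) sequentially"
    using eventually_gt_at_top[of 0]
  proof eventually_elim
    case (elim n)
    have "root n (f n) \<le> root n (K * (real n + 1) * r ^ n)"
      using bound elim by (rule real_root_le_mono[rotated])
    also have "\<dots> = root n (K * (real n + 1)) * root n (r ^ n)"
      by (rule real_root_mult)
    also have "\<dots> = root n (K * (real n + 1)) * r"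
      using elim r by (simp add: real_root_power_cancel)
    also have "\<dots> = ?g n"
      using elim K by (simp add: root_powr_inverse)
    finally show ?case by simp
  qed
  then have "limsup (\<lambda>n. ereal (root n (f n))) \<le> limsup (\<lambda>n. ereal (?g n))"
    by (rule Limsup_mono)
  also have "\<dots> = ereal r"
    using lim by (intro lim_imp_Limsup) simp_all
  finally show ?thesis .
qed

lemma eventually_linear_power_less:
  fixes c p q :: real
  assumes c: "0 < c" and q: "0 \<le> q" "q < p"
  shows "eventually (\<lambda>B. (real B + 1) * q ^ B < c * p ^ B) sequentially"
proof -
  have p: "0 < p" using q by simp
  have "norm (q / p) < 1"
    using q by simp
  then have "(\<lambda>B. real B * (q / p) ^ B + (q / p) ^ B) \<longlonglongrightarrow> 0 + 0"
    by (intro tendsto_add powser_times_n_limit_0 LIMSEQ_power_zero)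
  then have "eventually (\<lambda>B. real B * (q / p) ^ B + (q / p) ^ B < c) sequentially"
    using c by (intro order_tendstoD(2)) simp_all
  then show ?thesis
  proof eventually_elim
    case (elim B)
    have "(real B + 1) * q ^ B = (real B * (q / p) ^ B + (q / p) ^ B) * p ^ B"
      using p by (simp add: power_divide algebra_simps)
    also have "\<dots> < c * p ^ B"
      using elim p by (intro mult_strict_right_mono) simp_all
    finally show ?case .
  qed
qed

lemma limsup_root_ge:
  fixes f :: "nat \<Rightarrow> real"
  assumes nonneg: "\<And>n. 0 \<le> f n"
    and sums: "eventually (\<lambda>B. c * p ^ B \<le> (\<Sum>n\<le>B. f n)) sequentially"
    and c: "0 < c" and q: "1 < q" "q < p"
  shows "ereal q \<le> limsup (\<lambda>n. ereal (root n (f n)))"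
  unfolding limsup_INF_SUP
proof (rule INF_greatest)
  fix N :: nat
  let ?S = "\<Sum>m\<le>N. f m"
  obtain B0 where B0: "?S < q ^ B0"
    using real_arch_pow[OF q(1)] by blast
  have large: "eventually (\<lambda>B. ?S < q ^ B) sequentially"
    using eventually_ge_at_top[of B0]
  proof eventually_elim
    case (elim B)
    then have "q ^ B0 \<le> q ^ B"
      using q by (intro power_increasing) simp_all
    then show ?case using B0 by simp
  qed
  have "0 \<le> q" using q by simp
  from eventually_linear_power_less[OF c this q(2)] large sums
  have "eventually (\<lambda>B. (real B + 1) * q ^ B < c * p ^ B \<and> ?S < q ^ B
      \<and> c * p ^ B \<le> (\<Sum>n\<le>B. f n)) sequentially"
    by eventually_elim blast
  then obtain B where B: "(real B + 1) * q ^ B < c * p ^ B" "?S < q ^ B"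
    and sum: "c * p ^ B \<le> (\<Sum>n\<le>B. f n)"
    unfolding eventually_sequentially by blast
  have "\<not> (\<forall>n\<le>B. f n \<le> q ^ B)"
  proof
    assume "\<forall>n\<le>B. f n \<le> q ^ B"
    then have "(\<Sum>n\<le>B. f n) \<le> (\<Sum>n\<le>B. q ^ B)"
      by (intro sum_mono) simp
    also have "\<dots> = (real B + 1) * q ^ B"
      by simp
    finally show False
      using B(1) sum by simp
  qed
  then obtain n where n: "n \<le> B" "q ^ B < f n"
    by (auto simp: not_le)
  have "N < n"
  proof (rule ccontr)
    assume "\<not> N < n"
    then have "f n \<le> ?S"
      using nonneg by (intro member_le_sum) auto
    then show False using n(2) B(2) by simp
  qed
  have "q ^ n \<le> q ^ B"
    using q by (intro power_increasing[OF n(1)]) simp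
  then have "q ^ n \<le> f n"
    using n(2) by simp
  then have "q \<le> root n (f n)"
    using \<open>N < n\<close> q real_root_le_mono[of n "q ^ n" "f n"] by (simp add: real_root_power_cancel)
  then show "ereal q \<le> (SUP m\<in>{N..}. ereal (root m (f m)))"
    using \<open>N < n\<close> by (intro SUP_upper2[of n]) auto
qed

section \<open>Non-adjacent form\<close>

(* For odd x the digit d is chosen with 4 dividing x - d, so no two adjacent NAF digits
   are nonzero. *)
definition naf_digit :: "int \<Rightarrow> int" where
  "naf_digit x = (if even x then 0 else if x mod 4 = 1 then 1 else -1)"

definition naf_step :: "int \<Rightarrow> int" where
  "naf_step x = (x - naf_digit x) div 2"

lemma abs_naf_step_less: "x \<noteq> 0 \<Longrightarrow> \<bar>naf_step x\<bar> < \<bar>x\<bar>"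
  unfolding naf_step_def naf_digit_def by (auto simp: abs_if) presburger+

function naf_length :: "int \<Rightarrow> nat" where
  "naf_length x = (if x = 0 then 0 else Suc (naf_length (naf_step x)))"
  by auto
termination by (relation "Wellfounded.measure (\<lambda>x. nat \<bar>x\<bar>)") (auto dest: abs_naf_step_less)

function naf_weight :: "int \<Rightarrow> nat" where
  "naf_weight x =
     (if x = 0 then 0 else if even x then naf_weight (naf_step x) else Suc (naf_weight (naf_step x)))"
  by auto
termination by (relation "Wellfounded.measure (\<lambda>x. nat \<bar>x\<bar>)") (auto dest: abs_naf_step_less)

(* Horner's rule in BS(1,2): t (y, 0) t^-1 = (2 y, 0), so (x, 0) = a^d t (naf_step x, 0) t^-1. *)
function naf_word :: "int \<Rightarrow> bs list" where
  "naf_word x = (if x = 0 then [] else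
     (if even x then [] else [(of_int (naf_digit x), 0)]) @ [(0, 1)] @ naf_word (naf_step x) @ [(0, -1)])"
  by auto
termination by (relation "Wellfounded.measure (\<lambda>x. nat \<bar>x\<bar>)") (auto dest: abs_naf_step_less)

declare naf_length.simps [simp del] naf_weight.simps [simp del] naf_word.simps [simp del]

lemma naf_step_double [simp]: "naf_step (2 * y) = y"
  by (simp add: naf_step_def naf_digit_def)

lemma naf_digit_4_plus_1 [simp]: "naf_digit (4 * y + 1) = 1"
  and naf_digit_4_minus_1 [simp]: "naf_digit (4 * y - 1) = -1"
  unfolding naf_digit_def by presburger+

lemma naf_step_4_plus_1 [simp]: "naf_step (4 * y + 1) = 2 * y"
  and naf_step_4_minus_1 [simp]: "naf_step (4 * y - 1) = 2 * y"
  unfolding naf_step_def by simp_all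

lemma odd_4_plus_1 [simp]: "odd (4 * y + 1 :: int)"
  and odd_4_minus_1 [simp]: "odd (4 * y - 1 :: int)"
  and four_mult_plus_1_neq_0 [simp]: "4 * y + 1 \<noteq> (0 :: int)"
  and four_mult_neq_1 [simp]: "4 * y \<noteq> (1 :: int)"
  by presburger+

lemma naf_length_0 [simp]: "naf_length 0 = 0"
  and naf_weight_0 [simp]: "naf_weight 0 = 0"
  and naf_word_0 [simp]: "naf_word 0 = []"
  by (simp_all add: naf_length.simps naf_weight.simps naf_word.simps)

lemma naf_length_double: "y \<noteq> 0 \<Longrightarrow> naf_length (2 * y) = Suc (naf_length y)"
  and naf_weight_double [simp]: "naf_weight (2 * y) = naf_weight y"
  and naf_word_double: "y \<noteq> 0 \<Longrightarrow> naf_word (2 * y) = (0, 1) # naf_word y @ [(0, -1)]"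
  by (simp_all add: naf_length.simps[of "2 * y"] naf_weight.simps[of "2 * y"] naf_word.simps[of "2 * y"])

lemma naf_4_plus_1:
  "naf_length (4 * y + 1) = Suc (naf_length (2 * y))"
  "naf_weight (4 * y + 1) = Suc (naf_weight y)"
  "naf_word (4 * y + 1) = (1, 0) # (0, 1) # naf_word (2 * y) @ [(0, -1)]"
  by (simp_all add: naf_length.simps[of "4 * y + 1"] naf_weight.simps[of "4 * y + 1"]
      naf_word.simps[of "4 * y + 1"])

lemma naf_4_minus_1:
  "naf_length (4 * y - 1) = Suc (naf_length (2 * y))"
  "naf_weight (4 * y - 1) = Suc (naf_weight y)"
  "naf_word (4 * y - 1) = (-1, 0) # (0, 1) # naf_word (2 * y) @ [(0, -1)]"
  by (simp_all add: naf_length.simps[of "4 * y - 1"] naf_weight.simps[of "4 * y - 1"]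
      naf_word.simps[of "4 * y - 1"])

lemmas [simp] = naf_4_plus_1(2) naf_4_minus_1(2)

lemma naf_length_one [simp]: "naf_length 1 = 1" "naf_length (- 1) = 1"
  using naf_4_plus_1(1)[of 0] naf_4_minus_1(1)[of 0] by simp_all

lemma naf_weight_one [simp]: "naf_weight 1 = 1" "naf_weight (- 1) = 1"
  using naf_4_plus_1(2)[of 0] naf_4_minus_1(2)[of 0] by simp_all

lemma int_mod4_cases:
  fixes x :: int
  obtains (double) y where "x = 2 * y" | (plus) y where "x = 4 * y + 1" | (minus) y where "x = 4 * y - 1"
proof -
  have "even x \<or> x mod 4 = 1 \<or> x mod 4 = 3" by presburger
  then consider "even x" | "x mod 4 = 1" | "x mod 4 = 3" by blast
  then show ?thesis
  proof cases
    case 1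
    then have "x = 2 * (x div 2)" by presburger
    then show ?thesis by (rule double)
  next
    case 2
    then have "x = 4 * (x div 4) + 1" by presburger
    then show ?thesis by (rule plus)
  next
    case 3
    then have "x = 4 * ((x + 1) div 4) - 1" by presburger
    then show ?thesis by (rule minus)
  qed
qed

lemma naf_induct [case_names zero double plus minus]:
  fixes x :: int
  assumes "P 0"
    and "\<And>y. y \<noteq> 0 \<Longrightarrow> P y \<Longrightarrow> P (2 * y)"
    and "\<And>y. P y \<Longrightarrow> P (2 * y) \<Longrightarrow> P (4 * y + 1)"
    and "\<And>y. P y \<Longrightarrow> P (2 * y) \<Longrightarrow> P (4 * y - 1)"
  shows "P x"
proof (induction "nat \<bar>x\<bar>" arbitrary: x rule: less_induct)
  case less
  have IH: "P z" if "\<bar>z\<bar> < \<bar>x\<bar>" for z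
    using less that by auto
  show ?case
  proof (cases x rule: int_mod4_cases)
    case (double y)
    then show ?thesis
      using assms(1) assms(2)[of y] IH[of y] by (cases "y = 0") auto
  next
    case (plus y)
    moreover have "\<bar>y\<bar> < \<bar>x\<bar>" "\<bar>2 * y\<bar> < \<bar>x\<bar>"
      using plus by arith+
    ultimately show ?thesis
      using assms(3) IH by blast
  next
    case (minus y)
    moreover have "\<bar>y\<bar> < \<bar>x\<bar>" "\<bar>2 * y\<bar> < \<bar>x\<bar>"
      using minus by arith+
    ultimately show ?thesis
      using assms(4) IH by blast
  qed
qed

lemma naf_weight_uminus [simp]: "naf_weight (- x) = naf_weight x"
proof (induction x rule: naf_induct)
  case (double y)
  have "- (2 * y) = 2 * (- y)" by simp
  then show ?case using double.IH by (simp only: naf_weight_double)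
next
  case (plus y)
  have "- (4 * y + 1) = 4 * (- y) - 1" by simp
  then show ?case using plus.IH(1) by (simp only: naf_4_plus_1(2) naf_4_minus_1(2))
next
  case (minus y)
  have "- (4 * y - 1) = 4 * (- y) + 1" by simp
  then show ?case using minus.IH(1) by (simp only: naf_4_plus_1(2) naf_4_minus_1(2))
qed simp

lemma naf_weight_odd_neighbours:
  "naf_weight (2 * y + 1) \<le> Suc (naf_weight y) \<and> naf_weight (2 * y - 1) \<le> Suc (naf_weight y)"
proof (induction y rule: naf_induct)
  case zero
  show ?case using naf_4_plus_1(2)[of 0] naf_4_minus_1(2)[of 0] by simp
next
  case (double z)
  show ?case using naf_4_plus_1(2)[of z] naf_4_minus_1(2)[of z] by simp
next
  case (plus z)
  have "2 * (4 * z + 1) + 1 = 4 * (2 * z + 1) - 1" "2 * (4 * z + 1) - 1 = 4 * (2 * z) + 1"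
    by simp_all
  then show ?case using plus(1) by (simp only: naf_4_plus_1(2) naf_4_minus_1(2)) simp
next
  case (minus z)
  have "2 * (4 * z - 1) + 1 = 4 * (2 * z) - 1" "2 * (4 * z - 1) - 1 = 4 * (2 * z - 1) + 1"
    by simp_all
  then show ?case using minus(1) by (simp only: naf_4_plus_1(2) naf_4_minus_1(2)) simp
qed

lemma naf_weight_succ_le: "naf_weight (x + 1) \<le> Suc (naf_weight x)"
proof (cases x rule: int_mod4_cases)
  case (double y)
  then show ?thesis using naf_weight_odd_neighbours[of y] by simp
next
  case (plus y)
  then have "x + 1 = 2 * (2 * y + 1)" by simp
  then show ?thesis
    unfolding plus using naf_weight_odd_neighbours[of y]
    by (simp only: naf_4_plus_1(2) naf_weight_double) simp
next
  case (minus y)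
  then have "x + 1 = 2 * (2 * y)" by simp
  then show ?thesis unfolding minus by (simp only: naf_4_minus_1(2) naf_weight_double)
qed

lemma naf_weight_add_two_le: "naf_weight (x + 2) \<le> Suc (naf_weight x)"
proof (cases x rule: int_mod4_cases)
  case (double y)
  then have "x + 2 = 2 * (y + 1)" by simp
  then show ?thesis
    using naf_weight_succ_le[of y] unfolding double by (simp only: naf_weight_double)
next
  case (plus y)
  then have "x + 2 = 4 * (y + 1) - 1" by simp
  then show ?thesis
    using naf_weight_succ_le[of y] unfolding plus by (simp only: naf_4_plus_1(2) naf_4_minus_1(2))
next
  case (minus y)
  then have "x + 2 = 4 * y + 1" by simp
  then show ?thesis unfolding minus by (simp only: naf_4_plus_1(2) naf_4_minus_1(2))
qed

lemma naf_weight_add_power_le: "naf_weight (x + 2 ^ e) \<le> Suc (naf_weight x)"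
proof (induction e arbitrary: x rule: less_induct)
  case (less e)
  consider "e = 0" | "e = 1" | e' where "e = e' + 2"
    by (metis One_nat_def add_2_eq_Suc' not0_implies_Suc)
  then show ?case
  proof cases
    case 3
    show ?thesis
    proof (cases x rule: int_mod4_cases)
      case (double y)
      then have "x + 2 ^ e = 2 * (y + 2 ^ (e' + 1))" by (simp add: 3)
      then show ?thesis
        using less.IH[of "e' + 1" y] 3 unfolding double by (simp only: naf_weight_double)
    next
      case (plus y)
      then have "x + 2 ^ e = 4 * (y + 2 ^ e') + 1" by (simp add: 3)
      then show ?thesis
        using less.IH[of e' y] 3 unfolding plus by (simp only: naf_4_plus_1(2)) simp
    next
      case (minus y)
      then have "x + 2 ^ e = 4 * (y + 2 ^ e') - 1" by (simp add: 3)
      then show ?thesis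
        using less.IH[of e' y] 3 unfolding minus by (simp only: naf_4_minus_1(2)) simp
    qed
  qed (use naf_weight_succ_le naf_weight_add_two_le in simp_all)
qed

lemma naf_weight_add_signed_power_le:
  assumes "s \<in> {1, -1}"
  shows "naf_weight (x + s * 2 ^ e) \<le> Suc (naf_weight x)"
proof (cases "s = 1")
  case True
  then show ?thesis using naf_weight_add_power_le by simp
next
  case False
  with assms have "x + s * 2 ^ e = - (- x + 2 ^ e)" by simp
  then show ?thesis using naf_weight_add_power_le[of "- x" e] by (simp only: naf_weight_uminus)
qed

lemma power_naf_length_le: "x \<noteq> 0 \<Longrightarrow> 2 ^ naf_length x + 2 \<le> 4 * \<bar>x\<bar>"
proof (induction x rule: naf_induct)
  case (double y)
  then show ?case by (simp add: naf_length_double)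
next
  case (plus y)
  show ?case
  proof (cases "y = 0")
    case False
    moreover have "4 * \<bar>y\<bar> - 1 \<le> \<bar>4 * y + 1\<bar>" by arith
    ultimately show ?thesis using plus.IH(1) by (simp add: naf_4_plus_1(1) naf_length_double)
  qed (simp add: naf_4_plus_1(1))
next
  case (minus y)
  show ?case
  proof (cases "y = 0")
    case False
    moreover have "4 * \<bar>y\<bar> - 1 \<le> \<bar>4 * y - 1\<bar>" by arith
    ultimately show ?thesis using minus.IH(1) by (simp add: naf_4_minus_1(1) naf_length_double)
  qed (simp add: naf_4_minus_1(1))
qed simp

section \<open>Integers of bounded NAF cost\<close>

definition naf_cost :: "int \<Rightarrow> nat" where
  "naf_cost x = 2 * naf_length x + naf_weight x"

lemma naf_cost_0 [simp]: "naf_cost 0 = 0"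
  and naf_cost_one [simp]: "naf_cost 1 = 3" "naf_cost (- 1) = 3"
  by (simp_all add: naf_cost_def)

lemma naf_cost_double: "y \<noteq> 0 \<Longrightarrow> naf_cost (2 * y) = naf_cost y + 2"
  by (simp add: naf_cost_def naf_length_double)

lemma naf_cost_4_plus_1: "y \<noteq> 0 \<Longrightarrow> naf_cost (4 * y + 1) = naf_cost y + 5"
  and naf_cost_4_minus_1: "y \<noteq> 0 \<Longrightarrow> naf_cost (4 * y - 1) = naf_cost y + 5"
  by (simp_all add: naf_cost_def naf_4_plus_1(1) naf_4_minus_1(1) naf_length_double)

lemma naf_cost_double_le: "naf_cost (2 * y) \<le> naf_cost y + 2"
  and naf_cost_4_plus_1_le: "naf_cost (4 * y + 1) \<le> naf_cost y + 5"
  and naf_cost_4_minus_1_le: "naf_cost (4 * y - 1) \<le> naf_cost y + 5"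
  by (cases "y = 0"; simp add: naf_cost_double naf_cost_4_plus_1 naf_cost_4_minus_1)+

lemma naf_cost_ge_3: "x \<noteq> 0 \<Longrightarrow> 3 \<le> naf_cost x"
proof (induction x rule: naf_induct)
  case (plus y)
  then show ?case by (cases "y = 0") (simp_all add: naf_cost_4_plus_1)
next
  case (minus y)
  then show ?case by (cases "y = 0") (simp_all add: naf_cost_4_minus_1)
qed (simp_all add: naf_cost_double)

definition naf_sublevel :: "nat \<Rightarrow> int set" where
  "naf_sublevel B = {x. naf_cost x \<le> B}"

lemma zero_in_naf_sublevel [simp]: "0 \<in> naf_sublevel B"
  by (simp add: naf_sublevel_def)

lemma naf_sublevel_small: "B < 5 \<Longrightarrow> naf_sublevel B \<subseteq> {0, 1, -1}"
proof
  fix x assume "B < 5" "x \<in> naf_sublevel B"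
  then have cost: "naf_cost x < 5" by (simp add: naf_sublevel_def)
  show "x \<in> {0, 1, -1}"
  proof (cases x rule: int_mod4_cases)
    case (double y)
    then show ?thesis using cost naf_cost_double[of y] naf_cost_ge_3[of y] by (cases "y = 0") auto
  next
    case (plus y)
    then show ?thesis using cost naf_cost_4_plus_1[of y] naf_cost_ge_3[of y] by (cases "y = 0") auto
  next
    case (minus y)
    then show ?thesis using cost naf_cost_4_minus_1[of y] naf_cost_ge_3[of y] by (cases "y = 0") auto
  qed
qed

lemma naf_sublevel_subset:
  "naf_sublevel B \<subseteq> {0, 1, -1} \<union> (\<lambda>y. 2 * y) ` naf_sublevel (B - 2)
     \<union> (\<lambda>y. 4 * y + 1) ` naf_sublevel (B - 5) \<union> (\<lambda>y. 4 * y - 1) ` naf_sublevel (B - 5)"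
proof
  fix x assume "x \<in> naf_sublevel B"
  then have cost: "naf_cost x \<le> B" by (simp add: naf_sublevel_def)
  show "x \<in> {0, 1, -1} \<union> (\<lambda>y. 2 * y) ` naf_sublevel (B - 2)
     \<union> (\<lambda>y. 4 * y + 1) ` naf_sublevel (B - 5) \<union> (\<lambda>y. 4 * y - 1) ` naf_sublevel (B - 5)"
  proof (cases x rule: int_mod4_cases)
    case (double y)
    then have "y = 0 \<or> y \<in> naf_sublevel (B - 2)"
      using cost naf_cost_double[of y] by (cases "y = 0") (auto simp: naf_sublevel_def)
    then show ?thesis using double by auto
  next
    case (plus y)
    then have "y = 0 \<or> y \<in> naf_sublevel (B - 5)"
      using cost naf_cost_4_plus_1[of y] by (cases "y = 0") (auto simp: naf_sublevel_def)
    then show ?thesis using plus by auto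
  next
    case (minus y)
    then have "y = 0 \<or> y \<in> naf_sublevel (B - 5)"
      using cost naf_cost_4_minus_1[of y] by (cases "y = 0") (auto simp: naf_sublevel_def)
    then show ?thesis using minus by auto
  qed
qed

lemma finite_naf_sublevel [simp]: "finite (naf_sublevel B)"
proof (induction B rule: less_induct)
  case (less B)
  show ?case
  proof (cases "B < 5")
    case True
    then show ?thesis using naf_sublevel_small finite_subset by blast
  next
    case False
    then have "finite (naf_sublevel (B - 2))" "finite (naf_sublevel (B - 5))"
      using less.IH by simp_all
    then show ?thesis by (intro finite_subset[OF naf_sublevel_subset]) simp
  qed
qed

lemma card_naf_sublevel_small: "B < 5 \<Longrightarrow> card (naf_sublevel B) \<le> 3"
  using card_mono[OF _ naf_sublevel_small, of B] by (simp add: card_insert_if)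

lemma card_naf_sublevel_le:
  "card (naf_sublevel B) \<le> 3 + card (naf_sublevel (B - 2)) + 2 * card (naf_sublevel (B - 5))"
proof -
  let ?S = "naf_sublevel (B - 2)" and ?T = "naf_sublevel (B - 5)"
  have "card (naf_sublevel B) \<le> card ({0, 1, -1} \<union> (\<lambda>y. 2 * y) ` ?S
     \<union> (\<lambda>y. 4 * y + 1) ` ?T \<union> (\<lambda>y. 4 * y - 1) ` ?T)"
    by (intro card_mono naf_sublevel_subset) simp
  also have "\<dots> \<le> card {0, 1, -1 :: int} + card ((\<lambda>y. 2 * y) ` ?S)
     + card ((\<lambda>y. 4 * y + 1) ` ?T) + card ((\<lambda>y. 4 * y - 1) ` ?T)"
    by (intro order_trans[OF card_Un_le] add_mono order_refl)
  also have "\<dots> \<le> 3 + card ?S + card ?T + card ?T"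
    by (intro add_mono card_image_le) simp_all
  finally show ?thesis by simp
qed

lemma card_odd_naf_sublevel_ge:
  assumes "5 \<le> B"
  shows "2 * card (naf_sublevel (B - 5)) \<le> card {x \<in> naf_sublevel B. odd x}"
proof -
  let ?T = "naf_sublevel (B - 5)"
  let ?P = "(\<lambda>y. 4 * y + 1) ` ?T" and ?M = "(\<lambda>y. 4 * y - 1) ` ?T"
  have "?P \<union> ?M \<subseteq> {x \<in> naf_sublevel B. odd x}"
  proof -
    have "4 * y + 1 \<in> naf_sublevel B" "4 * y - 1 \<in> naf_sublevel B" if "y \<in> ?T" for y
      using that assms naf_cost_4_plus_1_le[of y] naf_cost_4_minus_1_le[of y]
      by (simp_all add: naf_sublevel_def)
    then show ?thesis by auto
  qed
  then have "card (?P \<union> ?M) \<le> card {x \<in> naf_sublevel B. odd x}"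
    by (intro card_mono) simp_all
  moreover have "?P \<inter> ?M = {}"
  proof -
    have "4 * a + 1 \<noteq> 4 * b - (1 :: int)" for a b by presburger
    then show ?thesis by blast
  qed
  then have "card (?P \<union> ?M) = card ?T + card ?T"
    by (simp add: card_Un_disjoint card_image inj_on_def)
  ultimately show ?thesis by simp
qed

lemma card_naf_sublevel_ge:
  assumes "5 \<le> B"
  shows "card (naf_sublevel (B - 2)) + 2 * card (naf_sublevel (B - 5)) \<le> card (naf_sublevel B)"
proof -
  let ?E = "{x \<in> naf_sublevel B. even x}" and ?O = "{x \<in> naf_sublevel B. odd x}"
  have "(\<lambda>y. 2 * y) ` naf_sublevel (B - 2) \<subseteq> ?E"
  proof -
    have "2 * y \<in> naf_sublevel B" if "y \<in> naf_sublevel (B - 2)" for y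
      using that assms naf_cost_double_le[of y] by (simp add: naf_sublevel_def)
    then show ?thesis by auto
  qed
  then have "card ((\<lambda>y. 2 * y) ` naf_sublevel (B - 2)) \<le> card ?E"
    by (intro card_mono) simp_all
  then have "card (naf_sublevel (B - 2)) \<le> card ?E"
    by (simp add: card_image inj_on_def)
  moreover have "card (naf_sublevel B) = card ?E + card ?O"
    by (subst card_Un_disjoint[symmetric]) (auto intro: arg_cong[where f = card])
  ultimately show ?thesis using card_odd_naf_sublevel_ge[OF assms] by linarith
qed

(* 1.3476 < \<rho> < 1.348 *)
lemma card_naf_sublevel_upper: "real (card (naf_sublevel B)) \<le> 5 * (1348 / 1000) ^ B"
  using recurrence_growth_upper[where f = "\<lambda>B. card (naf_sublevel B)" and r = "1348 / 1000",
      OF card_naf_sublevel_small card_naf_sublevel_le, of B]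
  by (simp add: eval_nat_numeral)

lemma card_naf_sublevel_lower:
  "(13476 / 10000) ^ B \<le> (13476 / 10000) ^ 4 * real (card (naf_sublevel B))"
proof -
  have "1 \<le> card (naf_sublevel B)" for B
    using card_mono[OF finite_naf_sublevel, of "{0}" B] by simp
  then show ?thesis
    using recurrence_growth_lower[where f = "\<lambda>B. card (naf_sublevel B)" and r = "13476 / 10000",
        OF _ card_naf_sublevel_ge]
    by (simp add: eval_nat_numeral)
qed

section \<open>Words in BS(1,2)\<close>

lemma bs_mult_Pair [simp]: "bs_mult (x, m) (y, n) = (x + 2 powi m * y, m + n)"
  by (simp add: bs_mult_def)

lemma bs_mult_assoc: "bs_mult (bs_mult g h) k = bs_mult g (bs_mult h k)"
  by (cases g; cases h; cases k) (simp add: power_int_add algebra_simps)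

lemma bs_eval_Nil [simp]: "bs_eval [] = (0, 0)"
  and bs_eval_Cons [simp]: "bs_eval (g # w) = bs_mult g (bs_eval w)"
  by (simp_all add: bs_eval_def bs_one_def)

lemma bs_eval_append: "bs_eval (u @ v) = bs_mult (bs_eval u) (bs_eval v)"
proof (induction u)
  case Nil
  then show ?case by (cases "bs_eval v") simp
qed (simp add: bs_mult_assoc)

lemma naf_word_in_gens: "set (naf_word x) \<subseteq> bs_gens"
  by (induction x rule: naf_induct)
    (simp_all add: naf_word_double naf_4_plus_1(3) naf_4_minus_1(3) bs_gens_def)

lemma length_naf_word: "length (naf_word x) = naf_cost x"
  by (induction x rule: naf_induct)
    (simp_all add: naf_cost_def naf_word_double naf_length_double naf_4_plus_1 naf_4_minus_1)

lemma bs_eval_naf_word: "bs_eval (naf_word x) = (of_int x, 0)"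
  by (induction x rule: naf_induct)
    (simp_all add: naf_word_double naf_4_plus_1(3) naf_4_minus_1(3) bs_eval_append)

lemma of_int_in_dyadic [simp]: "of_int z \<in> dyadic"
  unfolding dyadic_def by (rule CollectI, rule exI[of _ z], rule exI[of _ 0]) simp

lemma zero_in_dyadic [simp]: "0 \<in> dyadic"
  using of_int_in_dyadic[of 0] by simp

lemma dyadic_mult_power_int:
  assumes "x \<in> dyadic"
  shows "2 powi k * x \<in> dyadic"
proof -
  obtain z j where x: "x = of_int z / 2 ^ j"
    using assms unfolding dyadic_def by auto
  show ?thesis
  proof (cases "k \<ge> 0")
    case True
    then have "2 powi k * x = of_int (2 ^ nat k * z) / 2 ^ j"
      using x by (simp add: power_int_def)
    then show ?thesis unfolding dyadic_def by blast
  next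
    case False
    then have "2 powi k * x = of_int z / 2 ^ (j + nat (- k))"
      using x by (simp add: power_int_def power_add field_simps)
    then show ?thesis unfolding dyadic_def by blast
  qed
qed

lemma mem_conj_class_self: "g \<in> BS \<Longrightarrow> g \<in> conj_class g"
  unfolding conj_class_def by (cases g) (auto intro!: bexI[of _ "(0, 0)"] simp: BS_def)

lemma conj_class_dyadic:
  assumes "x \<in> dyadic"
  shows "conj_class (x, 0) = range (\<lambda>k. (2 powi k * x, 0))"
proof (intro equalityI subsetI)
  fix g assume "g \<in> conj_class (x, 0)"
  then obtain h where "bs_mult h (x, 0) = bs_mult g h"
    unfolding conj_class_def by auto
  then show "g \<in> range (\<lambda>k. (2 powi k * x, 0))"
    by (cases g; cases h) auto
next
  fix g :: bs assume "g \<in> range (\<lambda>k. (2 powi k * x, 0))"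
  then obtain k where g: "g = (2 powi k * x, 0)" by auto
  have "(0, k) \<in> BS" "g \<in> BS"
    using g dyadic_mult_power_int[OF assms] by (simp_all add: BS_def)
  moreover have "bs_mult (0, k) (x, 0) = bs_mult g (0, k)"
    using g by simp
  ultimately show "g \<in> conj_class (x, 0)"
    unfolding conj_class_def by blast
qed

lemma conj_class_mult_power_int:
  assumes "x \<in> dyadic"
  shows "conj_class (2 powi j * x, 0) = conj_class (x, 0)"
proof -
  have "(\<lambda>k. (2 powi k * (2 powi j * x), 0 :: int)) = (\<lambda>k. (2 powi k * x, 0)) \<circ> (\<lambda>k. k + j)"
    by (simp add: fun_eq_iff power_int_add mult.assoc)
  then have "range (\<lambda>k. (2 powi k * (2 powi j * x), 0 :: int))
      = (\<lambda>k. (2 powi k * x, 0)) ` range (\<lambda>k. k + j)"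
    by (simp only: image_comp)
  also have "range (\<lambda>k::int. k + j) = UNIV"
    by (rule surjI[of _ "\<lambda>k. k - j"]) simp
  finally show ?thesis
    using assms dyadic_mult_power_int[OF assms] by (simp add: conj_class_dyadic)
qed

lemma dyadic_word_exists:
  assumes "x \<in> dyadic"
  shows "\<exists>w. set w \<subseteq> bs_gens \<and> bs_eval w = (x, 0)"
proof -
  obtain z k where x: "x = of_int z / 2 ^ k"
    using assms unfolding dyadic_def by auto
  have t_power: "bs_eval (replicate k (0, 1)) = (0, int k)"
    and t_inv_power: "bs_eval (replicate k (0, -1)) = (0, - int k)"
    by (induction k) simp_all
  let ?w = "replicate k (0, -1) @ naf_word z @ replicate k (0, 1)"
  have "set ?w \<subseteq> bs_gens"
    using naf_word_in_gens[of z] by (auto simp: bs_gens_def)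
  moreover have "bs_eval ?w = (x, 0)"
    by (simp add: x bs_eval_append t_power t_inv_power bs_eval_naf_word power_int_def field_simps)
  ultimately show ?thesis by blast
qed

lemma word_len_le: "set w \<subseteq> bs_gens \<Longrightarrow> word_len (bs_eval w) \<le> length w"
  unfolding word_len_def by (rule Least_le) blast

lemma word_len_attained:
  assumes "set w \<subseteq> bs_gens"
  shows "\<exists>w'. set w' \<subseteq> bs_gens \<and> length w' = word_len (bs_eval w) \<and> bs_eval w' = bs_eval w"
proof -
  from assms have "\<exists>n w'. set w' \<subseteq> bs_gens \<and> length w' = n \<and> bs_eval w' = bs_eval w"
    by blast
  then show ?thesis unfolding word_len_def by (rule LeastI_ex)
qed

(* Invariant of a word with A letters a^\<plusminus>1 and T letters t^\<plusminus>1 spelling g = (x, H) whose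
   partial t-heights stay in [-m, M]: each a-letter contributes \<plusminus>2^(h + m) to X = 2^m x, and the
   t-letters have to reach both M and -m before ending at H. *)
definition word_shape :: "bs \<Rightarrow> nat \<Rightarrow> nat \<Rightarrow> bool" where
  "word_shape g A T \<longleftrightarrow> (\<exists>m M X. - int m \<le> snd g \<and> snd g \<le> int M \<and> 2 * (M + m) \<le> T + nat \<bar>snd g\<bar>
      \<and> fst g = of_int X / 2 ^ m \<and> naf_weight X \<le> A \<and> \<bar>X\<bar> \<le> int A * 2 ^ (M + m))"

lemma word_shapeI:
  assumes "- int m \<le> H" "H \<le> int M" "2 * (M + m) \<le> T + nat \<bar>H\<bar>"
    and "x = of_int X / 2 ^ m" "naf_weight X \<le> A" "\<bar>X\<bar> \<le> int A * 2 ^ (M + m)"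
  shows "word_shape (x, H) A T"
  using assms unfolding word_shape_def by auto

lemma word_shapeE:
  assumes "word_shape (x, H) A T"
  obtains m M X where "- int m \<le> H" "H \<le> int M" "2 * (M + m) \<le> T + nat \<bar>H\<bar>"
    and "x = of_int X / 2 ^ m" "naf_weight X \<le> A" "\<bar>X\<bar> \<le> int A * 2 ^ (M + m)"
  using assms unfolding word_shape_def by auto

lemma word_shape_mult_a:
  assumes s: "s \<in> {1, -1}" and "word_shape (x, H) A T"
  shows "word_shape (of_int s + x, H) (Suc A) T"
proof -
  obtain m M X where h: "- int m \<le> H" "H \<le> int M" "2 * (M + m) \<le> T + nat \<bar>H\<bar>"
    and x: "x = of_int X / 2 ^ m" and wX: "naf_weight X \<le> A" and aX: "\<bar>X\<bar> \<le> int A * 2 ^ (M + m)"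
    using assms(2) by (rule word_shapeE)
  have "\<bar>X + s * 2 ^ m\<bar> \<le> \<bar>X\<bar> + 2 ^ m"
    using s abs_triangle_ineq[of X "s * 2 ^ m"] by auto
  also have "(2 :: int) ^ m \<le> 2 ^ (M + m)"
    by (rule power_increasing) simp_all
  finally have "\<bar>X + s * 2 ^ m\<bar> \<le> int (Suc A) * 2 ^ (M + m)"
    using aX by (simp add: algebra_simps)
  moreover have "of_int s + x = of_int (X + s * 2 ^ m) / 2 ^ m"
    using x by (simp add: field_simps)
  moreover have "naf_weight (X + s * 2 ^ m) \<le> Suc A"
    using naf_weight_add_signed_power_le[OF s, of X m] wX by simp
  ultimately show ?thesis
    using h by (intro word_shapeI[where m = m and M = M]) simp_all
qed

lemma word_shape_mult_t:
  assumes "word_shape (x, H) A T"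
  shows "word_shape (2 * x, H + 1) A (Suc T)"
proof -
  obtain m M X where h: "- int m \<le> H" "H \<le> int M" "2 * (M + m) \<le> T + nat \<bar>H\<bar>"
    and x: "x = of_int X / 2 ^ m" and wX: "naf_weight X \<le> A" and aX: "\<bar>X\<bar> \<le> int A * 2 ^ (M + m)"
    using assms by (rule word_shapeE)
  show ?thesis
  proof (cases m)
    case 0
    then have "2 * x = of_int (2 * X) / 2 ^ 0" "\<bar>2 * X\<bar> \<le> int A * 2 ^ (Suc M + 0)"
      using x aX by simp_all
    then show ?thesis
      using h wX 0 by (intro word_shapeI[where m = 0 and M = "Suc M" and X = "2 * X"]) auto
  next
    case (Suc m')
    then have "2 * x = of_int X / 2 ^ m'" "\<bar>X\<bar> \<le> int A * 2 ^ (Suc M + m')"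
      using x aX by simp_all
    then show ?thesis
      using h wX Suc by (intro word_shapeI[where m = m' and M = "Suc M" and X = X]) auto
  qed
qed

lemma word_shape_mult_t_inv:
  assumes "word_shape (x, H) A T"
  shows "word_shape (x / 2, H - 1) A (Suc T)"
proof -
  obtain m M X where h: "- int m \<le> H" "H \<le> int M" "2 * (M + m) \<le> T + nat \<bar>H\<bar>"
    and x: "x = of_int X / 2 ^ m" and wX: "naf_weight X \<le> A" and aX: "\<bar>X\<bar> \<le> int A * 2 ^ (M + m)"
    using assms by (rule word_shapeE)
  have x2: "x / 2 = of_int X / 2 ^ Suc m"
    using x by simp
  show ?thesis
  proof (cases M)
    case 0
    have "int A * 2 ^ m \<le> int A * 2 ^ (0 + Suc m)"
      by (intro mult_left_mono power_increasing) simp_all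
    then have "\<bar>X\<bar> \<le> int A * 2 ^ (0 + Suc m)"
      using aX 0 by simp
    then show ?thesis
      using h wX x2 0 by (intro word_shapeI[where m = "Suc m" and M = 0 and X = X]) auto
  next
    case (Suc M')
    then have "\<bar>X\<bar> \<le> int A * 2 ^ (M' + Suc m)"
      using aX by simp
    then show ?thesis
      using h wX x2 Suc by (intro word_shapeI[where m = "Suc m" and M = M' and X = X]) auto
  qed
qed

lemma word_shape_bs_eval:
  assumes "set w \<subseteq> bs_gens"
  shows "\<exists>A T. A + T = length w \<and> word_shape (bs_eval w) A T"
  using assms
proof (induction w)
  case Nil
  have "word_shape (0, 0) 0 0"
    by (rule word_shapeI[of 0 _ 0 _ _ 0]) simp_all
  then show ?case by auto
next
  case (Cons g w)
  obtain x H where xH: "bs_eval w = (x, H)" by fastforce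
  obtain A T where AT: "A + T = length w" and shape: "word_shape (x, H) A T"
    using Cons xH by auto
  have "g \<in> bs_gens" using Cons.prems by simp
  then consider "g = (of_int 1, 0)" | "g = (of_int (-1), 0)" | "g = (0, 1)" | "g = (0, -1)"
    unfolding bs_gens_def by auto
  then have "word_shape (bs_eval (g # w)) (Suc A) T \<or> word_shape (bs_eval (g # w)) A (Suc T)"
  proof cases
    case 1
    then show ?thesis using word_shape_mult_a[OF _ shape, of 1] xH by simp
  next
    case 2
    then show ?thesis using word_shape_mult_a[OF _ shape, of "-1"] xH by simp
  next
    case 3
    then show ?thesis using word_shape_mult_t[OF shape] xH by (simp add: add.commute)
  next
    case 4
    then show ?thesis using word_shape_mult_t_inv[OF shape] xH by (simp add: power_int_minus)
  qed
  moreover have "Suc A + T = length (g # w)" "A + Suc T = length (g # w)"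
    using AT by simp_all
  ultimately show ?case by blast
qed

lemma word_value_numerator_cost:
  assumes "set w \<subseteq> bs_gens" "bs_eval w = (x, 0)"
  shows "\<exists>X m. x = of_int X / 2 ^ m \<and> naf_cost X \<le> length w + 2 * ceillog2 (length w) + 2"
proof -
  let ?n = "length w" and ?L = "ceillog2 (length w)"
  obtain A T where AT: "A + T = ?n" and "word_shape (x, 0) A T"
    using word_shape_bs_eval[OF assms(1)] assms(2) by auto
  then obtain m M X where MmT: "2 * (M + m) \<le> T" and x: "x = of_int X / 2 ^ m"
    and wX: "naf_weight X \<le> A" and aX: "\<bar>X\<bar> \<le> int A * 2 ^ (M + m)"
    by (auto elim: word_shapeE)
  have "naf_length X < ?L + M + m + 2"
  proof (cases "X = 0")
    case False
    have "(2 :: int) ^ naf_length X < 4 * \<bar>X\<bar>"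
      using power_naf_length_le[OF False] by simp
    also have "\<dots> \<le> 4 * (int ?n * 2 ^ (M + m))"
      using aX AT by (simp add: order_trans[OF _ mult_right_mono])
    also have "\<dots> \<le> 4 * (2 ^ ?L * 2 ^ (M + m))"
      using le_two_power_ceillog2[of ?n] by (simp flip: of_nat_le_iff)
    also have "\<dots> = 2 ^ (?L + M + m + 2)"
      by (simp add: power_add)
    finally show ?thesis
      by (rule power_less_imp_less_exp[rotated]) simp
  qed simp
  then have "naf_cost X \<le> ?n + 2 * ?L + 2"
    using MmT wX AT unfolding naf_cost_def by arith
  then show ?thesis using x by blast
qed

section \<open>Conjugacy classes inside Z[1/2]\<close>

definition Zhalf_classes :: "nat \<Rightarrow> bs set set" where
  "Zhalf_classes n = {C. (\<exists>g \<in> BS. C = conj_class g) \<and> C \<subseteq> Zhalf \<and> class_len C = n}"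

lemma c0_eq_card: "c0 n = card (Zhalf_classes n)"
  by (simp add: c0_def Zhalf_classes_def)

lemma Zhalf_class_word:
  assumes "C \<in> Zhalf_classes n"
  obtains w x where "set w \<subseteq> bs_gens" "length w = n" "bs_eval w = (x, 0)" "x \<in> dyadic"
    "C = conj_class (x, 0)"
proof -
  obtain g0 where g0: "g0 \<in> BS" "C = conj_class g0" and "C \<subseteq> Zhalf" and len: "class_len C = n"
    using assms unfolding Zhalf_classes_def by auto
  then obtain x0 where x0: "g0 = (x0, 0)" "x0 \<in> dyadic"
    using mem_conj_class_self[OF g0(1)] unfolding Zhalf_def by auto
  have "\<exists>g \<in> C. word_len g = class_len C"
    unfolding class_len_def by (rule LeastI_ex) (use g0 mem_conj_class_self in blast)
  then obtain k where k: "word_len (2 powi k * x0, 0) = n"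
    using g0(2) x0 len conj_class_dyadic[OF x0(2)] by auto
  let ?x = "2 powi k * x0"
  have x: "?x \<in> dyadic" using dyadic_mult_power_int[OF x0(2)] .
  then obtain w where "set w \<subseteq> bs_gens" "bs_eval w = (?x, 0)"
    using dyadic_word_exists by blast
  then obtain w' where "set w' \<subseteq> bs_gens" "length w' = n" "bs_eval w' = (?x, 0)"
    using word_len_attained k by metis
  moreover have "C = conj_class (?x, 0)"
    using conj_class_mult_power_int[OF x0(2)] g0(2) x0(1) by simp
  ultimately show ?thesis using that x by blast
qed

lemma Zhalf_classes_subset:
  "Zhalf_classes n \<subseteq> (\<lambda>X. conj_class (of_int X, 0)) ` naf_sublevel (n + 2 * ceillog2 n + 2)"
proof
  fix C assume "C \<in> Zhalf_classes n"
  then obtain w x where w: "set w \<subseteq> bs_gens" "length w = n" "bs_eval w = (x, 0)"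
    and x: "x \<in> dyadic" and C: "C = conj_class (x, 0)"
    by (rule Zhalf_class_word)
  then obtain X m where X: "x = of_int X / 2 ^ m" and cost: "naf_cost X \<le> n + 2 * ceillog2 n + 2"
    using word_value_numerator_cost by blast
  have "C = conj_class (2 powi int m * x, 0)"
    using C conj_class_mult_power_int[OF x, of "int m"] by simp
  also have "2 powi int m * x = of_int X"
    using X by simp
  finally show "C \<in> (\<lambda>X. conj_class (of_int X, 0)) ` naf_sublevel (n + 2 * ceillog2 n + 2)"
    using cost unfolding naf_sublevel_def by blast
qed

lemma finite_Zhalf_classes: "finite (Zhalf_classes n)"
  using finite_subset[OF Zhalf_classes_subset] by simp

lemma c0_upper: "real (c0 n) \<le> 10 * (1348 / 1000) ^ 2 * (real n + 1) * (1348 / 1000) ^ n"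
proof -
  define r :: real where "r = 1348 / 1000"
  have r: "0 \<le> r" "r ^ 2 \<le> 2"
    by (simp_all add: r_def power2_eq_square)
  let ?L = "ceillog2 n"
  have "c0 n \<le> card ((\<lambda>X. conj_class (of_int X, 0)) ` naf_sublevel (n + 2 * ?L + 2))"
    unfolding c0_eq_card by (rule card_mono[OF _ Zhalf_classes_subset]) simp
  also have "\<dots> \<le> card (naf_sublevel (n + 2 * ?L + 2))"
    by (rule card_image_le) simp
  finally have "real (c0 n) \<le> real (card (naf_sublevel (n + 2 * ?L + 2)))"
    by (simp only: of_nat_le_iff)
  also have "\<dots> \<le> 5 * r ^ (n + 2 * ?L + 2)"
    unfolding r_def by (rule card_naf_sublevel_upper)
  also have "\<dots> = 5 * r ^ 2 * (r ^ 2) ^ ?L * r ^ n"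
    by (unfold power_add power_mult[symmetric]) (simp add: ac_simps)
  also have "\<dots> \<le> 5 * r ^ 2 * 2 ^ ?L * r ^ n"
    using r by (intro mult_left_mono mult_right_mono power_mono) simp_all
  also have "\<dots> \<le> 5 * r ^ 2 * (2 * (real n + 1)) * r ^ n"
  proof -
    have "2 ^ ?L \<le> 2 * (n + 1)"
      using two_power_ceillog2_gt[of n] by (cases "n = 0") simp_all
    then have "real (2 ^ ?L) \<le> real (2 * (n + 1))"
      by (simp only: of_nat_le_iff)
    then have "(2 :: real) ^ ?L \<le> 2 * (real n + 1)"
      by simp
    then show ?thesis
      using r by (intro mult_left_mono mult_right_mono) simp_all
  qed
  also have "\<dots> = 10 * r ^ 2 * (real n + 1) * r ^ n"
    by simp
  finally show ?thesis
    unfolding r_def .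
qed

lemma odd_conj_class_inj:
  assumes "odd z1" "odd z2" "conj_class (of_int z1, 0) = conj_class (of_int z2, 0)"
  shows "z1 = z2"
proof -
  have "(of_int z1, 0) \<in> conj_class (of_int z2, 0)"
    using assms(3) mem_conj_class_self[of "(of_int z1, 0)"] by (simp add: BS_def)
  then obtain k where k: "(of_int z1 :: rat) = 2 powi k * of_int z2"
    using conj_class_dyadic[of "of_int z2"] by auto
  show ?thesis
  proof (cases "k \<ge> 0")
    case True
    then have "(of_int z1 :: rat) = of_int (2 ^ nat k * z2)"
      using k by (simp add: power_int_def)
    then have "z1 = 2 ^ nat k * z2"
      by (simp only: of_int_eq_iff)
    moreover from this have "nat k = 0"
      using assms(1) by (cases "nat k") simp_all
    ultimately show ?thesis by simp
  next
    case False
    then have "(of_int z2 :: rat) = of_int (2 ^ nat (- k) * z1)"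
      using k by (simp add: power_int_def field_simps)
    then have "z2 = 2 ^ nat (- k) * z1"
      by (simp only: of_int_eq_iff)
    moreover from this have "nat (- k) = 0"
      using assms(2) by (cases "nat (- k)") simp_all
    ultimately show ?thesis by simp
  qed
qed

lemma conj_class_of_int_in_Zhalf_classes:
  "conj_class (of_int z, 0) \<in> Zhalf_classes (class_len (conj_class (of_int z, 0)))"
proof -
  have "(of_int z, 0) \<in> BS"
    by (simp add: BS_def)
  moreover have "conj_class (of_int z, 0) \<subseteq> Zhalf"
    using conj_class_dyadic[of "of_int z"] dyadic_mult_power_int[of "of_int z"]
    by (auto simp: Zhalf_def)
  ultimately show ?thesis
    unfolding Zhalf_classes_def by blast
qed

lemma class_len_le_naf_cost: "class_len (conj_class (of_int z, 0)) \<le> naf_cost z"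
proof -
  have "(of_int z, 0) \<in> conj_class (of_int z, 0)"
    by (rule mem_conj_class_self) (simp add: BS_def)
  then have "class_len (conj_class (of_int z, 0)) \<le> word_len (of_int z, 0)"
    unfolding class_len_def by (auto intro: Least_le)
  also have "\<dots> \<le> naf_cost z"
    using word_len_le[OF naf_word_in_gens[of z]] by (simp add: bs_eval_naf_word length_naf_word)
  finally show ?thesis .
qed

lemma card_odd_naf_sublevel_le_sum_c0: "card {x \<in> naf_sublevel B. odd x} \<le> (\<Sum>n\<le>B. c0 n)"
proof -
  let ?f = "\<lambda>z. conj_class (of_int z :: rat, 0 :: int)"
  have "inj_on ?f {x \<in> naf_sublevel B. odd x}"
    by (rule inj_onI) (auto intro: odd_conj_class_inj)
  then have "card {x \<in> naf_sublevel B. odd x} = card (?f ` {x \<in> naf_sublevel B. odd x})"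
    by (simp add: card_image)
  also have "\<dots> \<le> card (\<Union>n\<le>B. Zhalf_classes n)"
  proof (intro card_mono)
    show "?f ` {x \<in> naf_sublevel B. odd x} \<subseteq> (\<Union>n\<le>B. Zhalf_classes n)"
      using conj_class_of_int_in_Zhalf_classes class_len_le_naf_cost
      by (fastforce simp: naf_sublevel_def intro: order_trans)
  qed (simp add: finite_Zhalf_classes)
  also have "\<dots> \<le> (\<Sum>n\<le>B. c0 n)"
    unfolding c0_eq_card by (rule card_UN_le) simp
  finally show ?thesis .
qed

lemma c0_partial_sums_lower:
  assumes "5 \<le> B"
  shows "2 * (13476 / 10000) ^ B \<le> (13476 / 10000) ^ 9 * (\<Sum>n\<le>B. real (c0 n))"
proof -
  define p :: real where "p = 13476 / 10000"
  have "2 * p ^ B = p ^ 5 * (2 * p ^ (B - 5))"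
    using assms by (simp add: p_def power_add[symmetric])
  also have "\<dots> \<le> p ^ 5 * (2 * (p ^ 4 * real (card (naf_sublevel (B - 5)))))"
    using card_naf_sublevel_lower[of "B - 5"] unfolding p_def by simp
  also have "\<dots> = p ^ 9 * real (2 * card (naf_sublevel (B - 5)))"
    by (simp add: power_add[symmetric])
  also have "\<dots> \<le> p ^ 9 * (\<Sum>n\<le>B. real (c0 n))"
    using card_odd_naf_sublevel_ge[OF assms] card_odd_naf_sublevel_le_sum_c0[of B]
    by (simp add: p_def flip: of_nat_sum)
  finally show ?thesis by (simp add: p_def)
qed

theorem corollary3p10:
  shows "ereal 1.3475 \<le> limsup (\<lambda>n. ereal (root n (real (c0 n))))
       \<and> limsup (\<lambda>n. ereal (root n (real (c0 n)))) < ereal 1.3485"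
proof
  have sums: "eventually (\<lambda>B. 2 / (13476 / 10000) ^ 9 * (13476 / 10000) ^ B
      \<le> (\<Sum>n\<le>B. real (c0 n))) sequentially"
    using eventually_ge_at_top[of 5]
    by eventually_elim (use c0_partial_sums_lower in \<open>simp add: field_simps\<close>)
  show "ereal 1.3475 \<le> limsup (\<lambda>n. ereal (root n (real (c0 n))))"
    by (rule limsup_root_ge[OF _ sums]) simp_all
  have "limsup (\<lambda>n. ereal (root n (real (c0 n)))) \<le> ereal (1348 / 1000)"
    by (rule limsup_root_le[OF c0_upper]) simp_all
  also have "\<dots> < ereal 1.3485"
    by simp
  finally show "limsup (\<lambda>n. ereal (root n (real (c0 n)))) < ereal 1.3485" .
qed
end
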